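(* Let $\mathcal{R}$ be an orthogonal TRS, $S$ a reduction strongly $p$-converging from $s$ to $t$, and $U$ a set of redex occurrences in $s$. Then $U/S$ is a set of redex occurrences in $t$.
   Context: Orthogonal = left-linear and non-overlapping. Partial terms over $\Sigma_\bot=\Sigma\uplus\{\bot\}$ ordered by $\le_\bot$ (replacing subterms by $\bot$) form a complete semilattice; $\liminf_{\iota\to\alpha}a_\iota=\bigvee_{\beta<\alpha}\bigwedge_{\beta\le\iota<\alpha}a_\iota$. A reduction $S=(t_\iota\to_{\pi_\iota}t_{\iota+1})_{\iota<\alpha}$ with contexts $c_\iota$ ($t_\iota$ with position $\pi_\iota$ replaced by $\bot$) strongly $p$-converges to $t$ if $\liminf_{\iota\to\lambda}c_\iota=t_\lambda$ for every limit $\lambda<\alpha$ and $t$ is the last term (closed) or $t=\liminf_{\iota\to\alpha}c_\iota$ (open). Descendants $U/S$ of a set $U$ of non-$\bot$ positions of $t_0$: for length 0, $U$; for a single step at $\pi$ with rule $l\to r$, each $u\in U$ yields $\{u\}$ if $\pi\not\le u$, $\emptyset$ if $u=\pi\cdot\pi'$ with $\pi'$ a function-symbol position of $l$, and $\{\pi\cdot w'\cdot x\mid r|_{w'}=l|_w\}$ if $u=\pi\cdot w\cdot x$ with $l|_w$ a variable; for successor length $\beta+1$, the descendants by the last step of the descendants by $S|_\beta$; for limit length $\alpha$, $u\in U/S$ iff $u$ is a non-$\bot$ position of $t_\alpha$ and there is $\beta<\alpha$ with $u\in U/(S|_\iota)$ for all $\beta\le\iota<\alpha$. *)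

theory Defs
  imports Main
begin

datatype ('f, 'v) lab = F 'f | V 'v | Bot

type_synonym pos = "nat list"

text \<open>A term is a partial map from positions to labels; None = not a position.\<close>
type_synonym ('f, 'v) pterm = "pos \<Rightarrow> ('f, 'v) lab option"

definition wf_term :: "('f \<Rightarrow> nat) \<Rightarrow> ('f, 'v) pterm \<Rightarrow> bool" where
  "wf_term ar t \<longleftrightarrow> t [] \<noteq> None \<and>
     (\<forall>p i. t (p @ [i]) \<noteq> None \<longleftrightarrow> (\<exists>f. t p = Some (F f) \<and> i < ar f))"

definition finite_total :: "('f \<Rightarrow> nat) \<Rightarrow> ('f, 'v) pterm \<Rightarrow> bool" where
  "finite_total ar t \<longleftrightarrow> wf_term ar t \<and> finite {p. t p \<noteq> None} \<and> (\<forall>p. t p \<noteq> Some Bot)"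

definition vars_of :: "('f, 'v) pterm \<Rightarrow> 'v set" where
  "vars_of t = {v. \<exists>p. t p = Some (V v)}"

definition subterm :: "('f, 'v) pterm \<Rightarrow> pos \<Rightarrow> ('f, 'v) pterm" where
  "subterm t p = (\<lambda>q. t (p @ q))"

definition repl :: "('f, 'v) pterm \<Rightarrow> pos \<Rightarrow> ('f, 'v) pterm \<Rightarrow> ('f, 'v) pterm" where
  "repl t p s = (\<lambda>q. if \<exists>x. q = p @ x then s (drop (length p) q) else t q)"

definition bot_term :: "('f, 'v) pterm" where
  "bot_term = (\<lambda>q. if q = [] then Some Bot else None)"

definition subst :: "('v \<Rightarrow> ('f, 'v) pterm) \<Rightarrow> ('f, 'v) pterm \<Rightarrow> ('f, 'v) pterm" where
  "subst \<sigma> r = (\<lambda>q.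
     if \<exists>w x v. q = w @ x \<and> r w = Some (V v) then
       (let w = (SOME w. \<exists>x v. q = w @ x \<and> r w = Some (V v)) in
         (case r w of Some (V v) \<Rightarrow> \<sigma> v (drop (length w) q) | _ \<Rightarrow> None))
     else r q)"

definition trs :: "('f \<Rightarrow> nat) \<Rightarrow> (('f, 'v) pterm \<times> ('f, 'v) pterm) set \<Rightarrow> bool" where
  "trs ar R \<longleftrightarrow> (\<forall>(l, r) \<in> R. finite_total ar l \<and> finite_total ar r \<and>
      (\<exists>f. l [] = Some (F f)) \<and> vars_of r \<subseteq> vars_of l)"

definition left_linear :: "(('f, 'v) pterm \<times> ('f, 'v) pterm) set \<Rightarrow> bool" where
  "left_linear R \<longleftrightarrow> (\<forall>(l, r) \<in> R. \<forall>p q v. l p = Some (V v) \<and> l q = Some (V v) \<longrightarrow> p = q)"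

definition non_overlapping :: "('f \<Rightarrow> nat) \<Rightarrow> (('f, 'v) pterm \<times> ('f, 'v) pterm) set \<Rightarrow> bool" where
  "non_overlapping ar R \<longleftrightarrow>
     (\<forall>(l1, r1) \<in> R. \<forall>(l2, r2) \<in> R. \<forall>p f. l1 p = Some (F f) \<longrightarrow>
        \<not> (p = [] \<and> (l1, r1) = (l2, r2)) \<longrightarrow>
        \<not> (\<exists>\<sigma>1 \<sigma>2. (\<forall>v. finite_total ar (\<sigma>1 v)) \<and> (\<forall>v. finite_total ar (\<sigma>2 v)) \<and>
              subst \<sigma>1 (subterm l1 p) = subst \<sigma>2 l2))"

definition orthogonal :: "('f \<Rightarrow> nat) \<Rightarrow> (('f, 'v) pterm \<times> ('f, 'v) pterm) set \<Rightarrow> bool" where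
  "orthogonal ar R \<longleftrightarrow> trs ar R \<and> left_linear R \<and> non_overlapping ar R"

definition rstep :: "('f \<Rightarrow> nat) \<Rightarrow> (('f, 'v) pterm \<times> ('f, 'v) pterm) set \<Rightarrow>
    ('f, 'v) pterm \<Rightarrow> pos \<Rightarrow> ('f, 'v) pterm \<times> ('f, 'v) pterm \<Rightarrow> ('f, 'v) pterm \<Rightarrow> bool" where
  "rstep ar R t p lr t' \<longleftrightarrow> lr \<in> R \<and>
     (\<exists>\<sigma>. (\<forall>v. wf_term ar (\<sigma> v)) \<and> subterm t p = subst \<sigma> (fst lr) \<and>
          t' = repl t p (subst \<sigma> (snd lr)))"

definition redex_occ :: "('f \<Rightarrow> nat) \<Rightarrow> (('f, 'v) pterm \<times> ('f, 'v) pterm) set \<Rightarrow>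
    ('f, 'v) pterm \<Rightarrow> pos \<Rightarrow> bool" where
  "redex_occ ar R t u \<longleftrightarrow>
     (\<exists>(l, r) \<in> R. \<exists>\<sigma>. (\<forall>v. wf_term ar (\<sigma> v)) \<and> subterm t u = subst \<sigma> l)"

definition le_bot :: "('f, 'v) pterm \<Rightarrow> ('f, 'v) pterm \<Rightarrow> bool" where
  "le_bot s t \<longleftrightarrow> (\<forall>p. s p \<noteq> None \<longrightarrow> t p \<noteq> None \<and> (s p = Some Bot \<or> s p = t p))"

definition is_glb :: "('f \<Rightarrow> nat) \<Rightarrow> ('f, 'v) pterm set \<Rightarrow> ('f, 'v) pterm \<Rightarrow> bool" where
  "is_glb ar A g \<longleftrightarrow> wf_term ar g \<and> (\<forall>a \<in> A. le_bot g a) \<and>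
     (\<forall>h. wf_term ar h \<and> (\<forall>a \<in> A. le_bot h a) \<longrightarrow> le_bot h g)"

definition is_lub :: "('f \<Rightarrow> nat) \<Rightarrow> ('f, 'v) pterm set \<Rightarrow> ('f, 'v) pterm \<Rightarrow> bool" where
  "is_lub ar A g \<longleftrightarrow> wf_term ar g \<and> (\<forall>a \<in> A. le_bot a g) \<and>
     (\<forall>h. wf_term ar h \<and> (\<forall>a \<in> A. le_bot a h) \<longrightarrow> le_bot g h)"

definition is_liminf :: "('f \<Rightarrow> nat) \<Rightarrow> ('o::wellorder \<Rightarrow> ('f, 'v) pterm) \<Rightarrow> 'o \<Rightarrow> ('f, 'v) pterm \<Rightarrow> bool" where
  "is_liminf ar a lam x \<longleftrightarrow>
     is_lub ar {g. \<exists>b < lam. is_glb ar {a i | i. b \<le> i \<and> i < lam} g} x"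

definition ord0 :: "'o::wellorder" where
  "ord0 = (LEAST x. True)"

definition osucc :: "'o::wellorder \<Rightarrow> 'o" where
  "osucc i = (LEAST k. i < k)"

definition is_limit :: "'o::wellorder \<Rightarrow> bool" where
  "is_limit lam \<longleftrightarrow> (\<exists>i. i < lam) \<and> (\<forall>i < lam. \<exists>k. i < k \<and> k < lam)"

definition ctx :: "('o \<Rightarrow> ('f, 'v) pterm) \<Rightarrow> ('o \<Rightarrow> pos) \<Rightarrow> 'o \<Rightarrow> ('f, 'v) pterm" where
  "ctx ts ps i = repl (ts i) (ps i) bot_term"

text \<open>A reduction of length alpha: terms ts i (i <= alpha), redex positions ps i and
  rules rs i (i < alpha). For an open reduction (alpha a limit) ts alpha denotes the limit.\<close>
definition strongly_p_converges ::
  "('f \<Rightarrow> nat) \<Rightarrow> (('f, 'v) pterm \<times> ('f, 'v) pterm) set \<Rightarrow> 'o::wellorder \<Rightarrow>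
   ('o \<Rightarrow> ('f, 'v) pterm) \<Rightarrow> ('o \<Rightarrow> pos) \<Rightarrow> ('o \<Rightarrow> ('f, 'v) pterm \<times> ('f, 'v) pterm) \<Rightarrow>
   ('f, 'v) pterm \<Rightarrow> bool" where
  "strongly_p_converges ar R alpha ts ps rs t \<longleftrightarrow>
     (\<forall>i \<le> alpha. wf_term ar (ts i)) \<and>
     (\<forall>i < alpha. rstep ar R (ts i) (ps i) (rs i) (ts (osucc i))) \<and>
     (\<forall>lam < alpha. is_limit lam \<longrightarrow> is_liminf ar (ctx ts ps) lam (ts lam)) \<and>
     t = ts alpha \<and>
     (is_limit alpha \<longrightarrow> is_liminf ar (ctx ts ps) alpha t)"

definition desc1 :: "('f, 'v) pterm \<times> ('f, 'v) pterm \<Rightarrow> pos \<Rightarrow> pos \<Rightarrow> pos set" where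
  "desc1 lr p u =
     (if \<not> (\<exists>x. u = p @ x) then {u}
      else if \<exists>p' f. u = p @ p' \<and> fst lr p' = Some (F f) then {}
      else {p @ w' @ x | w w' x v. u = p @ w @ x \<and> fst lr w = Some (V v) \<and> snd lr w' = Some (V v)})"

definition desc_step :: "('f, 'v) pterm \<times> ('f, 'v) pterm \<Rightarrow> pos \<Rightarrow> pos set \<Rightarrow> pos set" where
  "desc_step lr p U = (\<Union>u \<in> U. desc1 lr p u)"

text \<open>D b = U/(S|_b) for all b <= alpha, defined by transfinite recursion (this
  characterises D uniquely on [0, alpha]).\<close>
definition descendant_family ::
  "'o::wellorder \<Rightarrow> ('o \<Rightarrow> ('f, 'v) pterm) \<Rightarrow> ('o \<Rightarrow> pos) \<Rightarrow>
   ('o \<Rightarrow> ('f, 'v) pterm \<times> ('f, 'v) pterm) \<Rightarrow> pos set \<Rightarrow> ('o \<Rightarrow> pos set) \<Rightarrow> bool" where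
  "descendant_family alpha ts ps rs U D \<longleftrightarrow>
     (\<forall>b \<le> alpha. \<not> (\<exists>i. i < b) \<longrightarrow> D b = U) \<and>
     (\<forall>i < alpha. D (osucc i) = desc_step (rs i) (ps i) (D i)) \<and>
     (\<forall>b \<le> alpha. is_limit b \<longrightarrow>
        D b = {u. ts b u \<noteq> None \<and> ts b u \<noteq> Some Bot \<and>
                  (\<exists>c < b. \<forall>i. c \<le> i \<and> i < b \<longrightarrow> u \<in> D i)})"

end

(* A redex occurrence u of a rule l -> r is witnessed by the function symbols of l placed below u
   (for a linear l nothing else is needed), so it persists as long as these positions and the path
   to u are untouched. At a successor step at
   p, a descendant of u is either u itself, p not being above u, and then by non-overlapping the
   step misses the pattern of u; or it is a copy of u inside the image of a variable of the rule,
   which carries the same subterm. At a limit, a descendant u is a non-bottom position of the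
   limit term; as this term is the limit inferior of the contexts, from some point on no step
   takes place at or above u, so from then on the pattern of u is untouched, and being stable it
   is inherited by the limit inferior. *)

theory Submission
  imports Defs
begin

section \<open>Well-formed terms and substitution\<close>

lemma wf_term_root: "wf_term ar t \<Longrightarrow> t [] \<noteq> None"
  unfolding wf_term_def by blast

lemma wf_term_child:
  "wf_term ar t \<Longrightarrow> t (p @ [i]) \<noteq> None \<longleftrightarrow> (\<exists>f. t p = Some (F f) \<and> i < ar f)"
  unfolding wf_term_def by blast

lemma wf_term_prefix:
  assumes "wf_term ar t" "t (p @ q) \<noteq> None"
  shows "t p \<noteq> None \<and> (q \<noteq> [] \<longrightarrow> (\<exists>f. t p = Some (F f)))"
  using assms(2)
proof (induction q rule: rev_induct)
  case Nil
  then show ?case by simp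
next
  case (snoc i q)
  then obtain f where f: "t (p @ q) = Some (F f)"
    using wf_term_child[OF assms(1), of "p @ q" i] by auto
  then show ?case using snoc.IH by (cases "q = []") auto
qed

lemma wf_term_var_prefix_unique:
  assumes "wf_term ar l" "l w1 = Some (V v1)" "l w2 = Some (V v2)" "w1 @ x1 = w2 @ x2"
  shows "w1 = w2"
proof -
  have False if "wa @ z = wb" "z \<noteq> []" "l wa = Some (V va)" "l wb = Some (V vb)" for wa wb z va vb
    using wf_term_prefix[OF assms(1), of wa z] that by auto
  moreover obtain z where "w1 = w2 @ z \<and> z @ x1 = x2 \<or> w1 @ z = w2 \<and> x1 = z @ x2"
    using assms(4) by (auto simp: append_eq_append_conv2)
  ultimately show ?thesis using assms(2,3) by (metis append.right_neutral)
qed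

lemma subst_at_var:
  assumes "wf_term ar l" "l w = Some (V v)"
  shows "subst \<sigma> l (w @ x) = \<sigma> v x"
proof -
  define w0 where "w0 = (SOME w0. \<exists>x0 v0. w @ x = w0 @ x0 \<and> l w0 = Some (V v0))"
  have "\<exists>x0 v0. w @ x = w0 @ x0 \<and> l w0 = Some (V v0)"
    unfolding w0_def by (rule someI_ex) (use assms(2) in blast)
  then have "w0 = w" using wf_term_var_prefix_unique[OF assms(1) _ assms(2)] by metis
  then show ?thesis using assms(2) unfolding subst_def Let_def w0_def[symmetric] by auto
qed

lemma subst_below_no_var:
  "\<not> (\<exists>w x v. q = w @ x \<and> l w = Some (V v)) \<Longrightarrow> subst \<sigma> l q = l q"
  unfolding subst_def by (rule if_not_P)

lemma subst_at_fun:
  assumes "wf_term ar l" "l q = Some (F f)"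
  shows "subst \<sigma> l q = Some (F f)"
proof -
  have "\<not> (\<exists>w x v. q = w @ x \<and> l w = Some (V v))"
  proof
    assume "\<exists>w x v. q = w @ x \<and> l w = Some (V v)"
    then obtain w x v where "q = w @ x" "l w = Some (V v)" by blast
    then show False using wf_term_prefix[OF assms(1), of w x] assms(2) by (cases "x = []") auto
  qed
  then show ?thesis using assms(2) subst_below_no_var by metis
qed

lemma wf_term_subterm:
  assumes "wf_term ar t" "t p \<noteq> None"
  shows "wf_term ar (subterm t p)"
  using assms wf_term_child[OF assms(1), of "p @ _"] unfolding wf_term_def subterm_def by simp

lemma finite_total_subterm:
  assumes "finite_total ar t" "t p \<noteq> None"
  shows "finite_total ar (subterm t p)"
proof -
  have "{q. subterm t p q \<noteq> None} = (\<lambda>q. p @ q) -` {q. t q \<noteq> None}"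
    by (auto simp: subterm_def)
  moreover have "finite ((\<lambda>q. p @ q) -` {q. t q \<noteq> None})"
    using assms(1) by (intro finite_vimageI) (auto simp: finite_total_def inj_on_def)
  ultimately show ?thesis
    using assms wf_term_subterm unfolding finite_total_def by (auto simp: subterm_def)
qed

definition var_term :: "'v \<Rightarrow> ('f, 'v) pterm" where
  "var_term v = (\<lambda>q. if q = [] then Some (V v) else None)"

lemma finite_total_var_term: "finite_total ar (var_term v)"
proof -
  have "{q. var_term v q \<noteq> None} = {[]}" by (auto simp: var_term_def)
  then show ?thesis unfolding finite_total_def wf_term_def by (simp add: var_term_def)
qed

section \<open>Matching of linear patterns\<close>

definition matches :: "('f, 'v) pterm \<Rightarrow> pos \<Rightarrow> ('f, 'v) pterm \<Rightarrow> bool" where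
  "matches t u l \<longleftrightarrow> (\<forall>\<pi> f. l \<pi> = Some (F f) \<longrightarrow> t (u @ \<pi>) = Some (F f))"

definition linear_term :: "('f, 'v) pterm \<Rightarrow> bool" where
  "linear_term l \<longleftrightarrow> (\<forall>p q v. l p = Some (V v) \<and> l q = Some (V v) \<longrightarrow> p = q)"

lemma matches_root:
  "matches t u l \<Longrightarrow> l [] = Some (F f) \<Longrightarrow> t u = Some (F f)"
  unfolding matches_def by (metis append_Nil2)

lemma matches_subterm: "matches (subterm t u) [] l \<longleftrightarrow> matches t u l"
  unfolding matches_def subterm_def by simp

lemma matches_if_subst_eq:
  assumes "wf_term ar l" "subterm t u = subst \<sigma> l"
  shows "matches t u l"
  unfolding matches_def
  using subst_at_fun[OF assms(1)] fun_cong[OF assms(2)] by (simp add: subterm_def)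

lemma matches_pos:
  assumes "wf_term ar t" "wf_term ar l" "matches t [] l" "l w \<noteq> None"
  shows "t w \<noteq> None"
proof (cases w rule: rev_cases)
  case Nil
  then show ?thesis using wf_term_root[OF assms(1)] by simp
next
  case (snoc w0 i)
  then obtain f where "l w0 = Some (F f)" "i < ar f" using wf_term_child[OF assms(2)] assms(4) by blast
  then show ?thesis using assms(3) wf_term_child[OF assms(1)] snoc unfolding matches_def by force
qed

text \<open>Meaningful for linear l only, where each variable has a unique occurrence.\<close>

definition matcher :: "('f, 'v) pterm \<Rightarrow> ('f, 'v) pterm \<Rightarrow> 'v \<Rightarrow> ('f, 'v) pterm" where
  "matcher t l v =
     (if \<exists>w. l w = Some (V v) then subterm t (SOME w. l w = Some (V v)) else var_term v)"

lemma matcher_cases: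
  "(\<exists>w. l w = Some (V v) \<and> matcher t l v = subterm t w) \<or> matcher t l v = var_term v"
  unfolding matcher_def by (metis (mono_tags, lifting) option.distinct(1) someI_ex)

lemma wf_term_matcher:
  assumes "wf_term ar t" "wf_term ar l" "matches t [] l"
  shows "wf_term ar (matcher t l v)"
  using matcher_cases[of l v t] wf_term_subterm[OF assms(1)] matches_pos[OF assms]
    finite_total_var_term[of ar v] by (auto simp: finite_total_def)

lemma finite_total_matcher:
  assumes "finite_total ar t" "wf_term ar l" "matches t [] l"
  shows "finite_total ar (matcher t l v)"
  using matcher_cases[of l v t] finite_total_subterm[OF assms(1)] matches_pos[OF _ assms(2,3)]
    assms(1) finite_total_var_term[of ar v] by (auto simp: finite_total_def)

lemma subst_matcher:
  assumes wft: "wf_term ar t" and wfl: "wf_term ar l" and nb: "\<forall>p. l p \<noteq> Some Bot"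
    and lin: "linear_term l" and m: "matches t [] l"
  shows "t = subst (matcher t l) l"
proof
  fix q
  show "t q = subst (matcher t l) l q"
  proof (cases "\<exists>w x v. q = w @ x \<and> l w = Some (V v)")
    case True
    then obtain w x v where h: "q = w @ x" "l w = Some (V v)" by blast
    have "(SOME w. l w = Some (V v)) = w"
      using h(2) lin by (intro some_equality) (auto simp: linear_term_def)
    then have "matcher t l v = subterm t w" using h(2) unfolding matcher_def by auto
    then show ?thesis using subst_at_var[OF wfl h(2)] h(1) by (simp add: subterm_def)
  next
    case False
    have "t q = l q" using False
    proof (induction q rule: rev_induct)
      case Nil
      then obtain f where "l [] = Some (F f)"
        using wf_term_root[OF wfl] nb by (metis append_Nil lab.exhaust option.exhaust)
      then show ?case using m unfolding matches_def by force
    next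
      case (snoc i q0)
      then have IH: "t q0 = l q0" by (metis append.assoc)
      show ?case
      proof (cases "l (q0 @ [i])")
        case None
        then show ?thesis using IH wf_term_child[OF wft] wf_term_child[OF wfl] by metis
      next
        case (Some a)
        then obtain f where "a = F f" using snoc.prems nb by (cases a) (blast, metis append_Nil2, blast)
        then show ?thesis using m Some unfolding matches_def by force
      qed
    qed
    then show ?thesis using subst_below_no_var[OF False] by simp
  qed
qed

section \<open>Redexes in orthogonal systems\<close>

lemma orthogonal_ruleD:
  assumes "orthogonal ar R" "(l, r) \<in> R"
  shows "finite_total ar l" "finite_total ar r" "\<exists>f. l [] = Some (F f)" "linear_term l"
  using assms unfolding orthogonal_def trs_def left_linear_def linear_term_def by fast+

lemma redex_occ_iff_matches:
  assumes orth: "orthogonal ar R" and wf: "wf_term ar t"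
  shows "redex_occ ar R t u \<longleftrightarrow> (\<exists>l r. (l, r) \<in> R \<and> matches t u l)"
proof
  assume "redex_occ ar R t u"
  then obtain l r \<sigma> where "(l, r) \<in> R" "subterm t u = subst \<sigma> l"
    unfolding redex_occ_def by blast
  then show "\<exists>l r. (l, r) \<in> R \<and> matches t u l"
    using matches_if_subst_eq orthogonal_ruleD(1)[OF orth] by (fastforce simp: finite_total_def)
next
  assume "\<exists>l r. (l, r) \<in> R \<and> matches t u l"
  then obtain l r where lr: "(l, r) \<in> R" and m: "matches t u l" by blast
  have wfl: "wf_term ar l" "\<forall>p. l p \<noteq> Some Bot"
    using orthogonal_ruleD(1)[OF orth lr] by (auto simp: finite_total_def)
  obtain f where "l [] = Some (F f)" using orthogonal_ruleD(3)[OF orth lr] by blast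
  then have "t u \<noteq> None" using matches_root[OF m] by simp
  then have wfu: "wf_term ar (subterm t u)" by (rule wf_term_subterm[OF wf])
  have mu: "matches (subterm t u) [] l" using m matches_subterm by blast
  show "redex_occ ar R t u"
    unfolding redex_occ_def
    using lr subst_matcher[OF wfu wfl orthogonal_ruleD(4)[OF orth lr] mu]
      wf_term_matcher[OF wfu wfl(1) mu] by blast
qed

lemma rstep_matches:
  assumes orth: "orthogonal ar R" and "rstep ar R t p lr t'"
  shows "lr \<in> R \<and> matches t p (fst lr) \<and> t p \<noteq> None"
proof -
  obtain \<sigma> where lr: "lr \<in> R" and eq: "subterm t p = subst \<sigma> (fst lr)"
    using assms(2) unfolding rstep_def by blast
  have "(fst lr, snd lr) \<in> R" using lr by simp
  note rule = orthogonal_ruleD[OF orth this]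
  have m: "matches t p (fst lr)"
    using matches_if_subst_eq[of ar, OF _ eq] rule(1) by (simp add: finite_total_def)
  then show ?thesis using lr rule(3) matches_root by fastforce
qed

text \<open>Non-overlapping only speaks about finite total instances; cutting a common instance off
  below the region P of both patterns, and putting the variable x at the frontier, yields one.\<close>

definition cut_below :: "(pos \<Rightarrow> bool) \<Rightarrow> 'v \<Rightarrow> ('f, 'v) pterm \<Rightarrow> ('f, 'v) pterm" where
  "cut_below P x t q =
     (if P q then t q else if q \<noteq> [] \<and> P (butlast q) \<and> t q \<noteq> None then Some (V x) else None)"

lemma wf_term_cut_below:
  assumes wf: "wf_term ar t" and root: "P []" and closed: "\<And>q i. P (q @ [i]) \<Longrightarrow> P q"
    and is_fun: "\<And>q. P q \<Longrightarrow> \<exists>f. t q = Some (F f)"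
  shows "wf_term ar (cut_below P x t)"
  unfolding wf_term_def
proof (intro conjI allI)
  show "cut_below P x t [] \<noteq> None" using root is_fun unfolding cut_below_def by force
  fix q i
  show "cut_below P x t (q @ [i]) \<noteq> None \<longleftrightarrow> (\<exists>f. cut_below P x t q = Some (F f) \<and> i < ar f)"
  proof
    assume "cut_below P x t (q @ [i]) \<noteq> None"
    then have "P q \<and> t (q @ [i]) \<noteq> None"
      using closed is_fun unfolding cut_below_def by (auto split: if_splits)
    then show "\<exists>f. cut_below P x t q = Some (F f) \<and> i < ar f"
      using wf_term_child[OF wf] unfolding cut_below_def by auto
  next
    assume "\<exists>f. cut_below P x t q = Some (F f) \<and> i < ar f"
    then obtain f where "P q" "t q = Some (F f)" "i < ar f"
      unfolding cut_below_def by (auto split: if_splits)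
    then show "cut_below P x t (q @ [i]) \<noteq> None"
      using wf_term_child[OF wf] unfolding cut_below_def by auto
  qed
qed

lemma finite_total_common_instance:
  assumes wf: "wf_term ar t" and ftA: "finite_total ar A" and ftB: "finite_total ar B"
    and root: "A [] = Some (F f0)" and mA: "matches t [] A" and mB: "matches t [] B"
  shows "\<exists>t'. finite_total ar t' \<and> matches t' [] A \<and> matches t' [] B"
proof -
  fix x
  define P where "P q \<longleftrightarrow> (\<exists>f. A q = Some (F f)) \<or> (\<exists>f. B q = Some (F f))" for q
  define t' where "t' = cut_below P x t"
  have wfA: "wf_term ar A" and wfB: "wf_term ar B" using ftA ftB by (auto simp: finite_total_def)
  have is_fun: "\<exists>f. t q = Some (F f)" if "P q" for q
    using that mA mB unfolding P_def matches_def by force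
  have closed: "P q" if "P (q @ [i])" for q i
    using that wf_term_prefix[OF wfA, of q "[i]"] wf_term_prefix[OF wfB, of q "[i]"]
    unfolding P_def by auto
  have "P []" using root unfolding P_def by blast
  then have wf': "wf_term ar t'" unfolding t'_def by (rule wf_term_cut_below[OF wf _ closed is_fun])
  have child: "C q \<noteq> None"
    if "wf_term ar C" "matches t [] C" "C (butlast q) = Some (F f)" "q = butlast q @ [last q]"
      "t q \<noteq> None" for C q f
  proof -
    have "t (butlast q) = Some (F f)" using that(2,3) unfolding matches_def by force
    then have "last q < ar f" using that(4,5) wf_term_child[OF wf] by (metis lab.inject(1) option.inject)
    then show ?thesis using that(1,3,4) wf_term_child by metis
  qed
  have "A q \<noteq> None \<or> B q \<noteq> None" if "t' q \<noteq> None" for q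
  proof (cases "P q")
    case False
    then have "q = butlast q @ [last q]" "P (butlast q)" "t q \<noteq> None"
      using that unfolding t'_def cut_below_def by (auto split: if_splits)
    then show ?thesis using child[OF wfA mA] child[OF wfB mB] unfolding P_def by blast
  qed (auto simp: P_def)
  then have "{q. t' q \<noteq> None} \<subseteq> {q. A q \<noteq> None} \<union> {q. B q \<noteq> None}" by blast
  then have "finite {q. t' q \<noteq> None}"
    by (rule finite_subset) (use ftA ftB in \<open>simp add: finite_total_def\<close>)
  moreover have "t' q \<noteq> Some Bot" for q
    using is_fun[of q] unfolding t'_def cut_below_def by (auto split: if_splits)
  moreover have "matches t' [] A" "matches t' [] B"
    using mA mB unfolding matches_def t'_def cut_below_def P_def by auto
  ultimately show ?thesis using wf' unfolding finite_total_def by blast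
qed

lemma orthogonal_no_overlap:
  assumes orth: "orthogonal ar R" and wf: "wf_term ar t"
    and lr1: "(l1, r1) \<in> R" and lr2: "(l2, r2) \<in> R"
    and m1: "matches t u l1" and m2: "matches t (u @ y) l2"
    and y: "y \<noteq> []" and fy: "l1 y = Some (F f)"
  shows False
proof -
  note rule1 = orthogonal_ruleD[OF orth lr1] and rule2 = orthogonal_ruleD[OF orth lr2]
  define A where "A = subterm l1 y"
  have "t (u @ y) = Some (F f)" using m1 fy unfolding matches_def by blast
  then have wfy: "wf_term ar (subterm t (u @ y))" using wf_term_subterm[OF wf] by simp
  have ftA: "finite_total ar A" unfolding A_def using finite_total_subterm[OF rule1(1)] fy by simp
  have linA: "linear_term A"
    using rule1(4) unfolding A_def linear_term_def subterm_def by blast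
  have mA: "matches (subterm t (u @ y)) [] A"
    using m1 unfolding matches_def A_def subterm_def by simp
  have mB: "matches (subterm t (u @ y)) [] l2" using m2 matches_subterm by blast
  have rootA: "A [] = Some (F f)" using fy unfolding A_def subterm_def by simp
  obtain t' where t': "finite_total ar t'" "matches t' [] A" "matches t' [] l2"
    using finite_total_common_instance[OF wfy ftA rule2(1) rootA mA mB] by blast
  have inst: "t' = subst (matcher t' l) l \<and> (\<forall>v. finite_total ar (matcher t' l v))"
    if ftl: "finite_total ar l" and "linear_term l" "matches t' [] l" for l
  proof -
    have "wf_term ar t'" "wf_term ar l" "\<forall>p. l p \<noteq> Some Bot"
      using t'(1) ftl unfolding finite_total_def by auto
    then show ?thesis using subst_matcher that(2,3) finite_total_matcher[OF t'(1) _ that(3)] by blast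
  qed
  have no: "non_overlapping ar R" using orth by (simp add: orthogonal_def)
  note no_overlap = bspec[OF bspec[OF no[unfolded non_overlapping_def] lr1, unfolded prod.case] lr2,
      unfolded prod.case]
  have "subst (matcher t' A) (subterm l1 y) = subst (matcher t' l2) l2"
    using inst[OF ftA linA t'(2)] inst[OF rule2(1,4) t'(3)] unfolding A_def by metis
  then show False
    using no_overlap fy y inst[OF ftA linA t'(2)] inst[OF rule2(1,4) t'(3)] by blast
qed

text \<open>The path to u and the function symbols of l below u: in an orthogonal system only steps at
  or above u can change them.\<close>

definition pattern_pos :: "pos \<Rightarrow> ('f, 'v) pterm \<Rightarrow> pos \<Rightarrow> bool" where
  "pattern_pos u l q \<longleftrightarrow> (\<exists>z. u = q @ z) \<or> (\<exists>\<pi> f. q = u @ \<pi> \<and> l \<pi> = Some (F f))"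

lemma pattern_pos_prefix:
  assumes wfl: "wf_term ar l" and q: "pattern_pos u l (q @ z)"
  shows "pattern_pos u l q"
proof (cases "\<exists>z'. u = (q @ z) @ z'")
  case True
  then show ?thesis unfolding pattern_pos_def by auto
next
  case False
  then obtain \<pi> f where \<pi>: "q @ z = u @ \<pi>" "l \<pi> = Some (F f)"
    using q unfolding pattern_pos_def by blast
  then obtain us where "q = u @ us \<and> us @ z = \<pi> \<or> q @ us = u \<and> z = us @ \<pi>"
    by (auto simp: append_eq_append_conv2)
  then show ?thesis
  proof
    assume us: "q = u @ us \<and> us @ z = \<pi>"
    then have "\<exists>g. l us = Some (F g)"
      using \<pi>(2) wf_term_prefix[OF wfl, of us z] by (cases "z = []") auto
    then show ?thesis using us unfolding pattern_pos_def by blast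
  qed (auto simp: pattern_pos_def)
qed

lemma pattern_pos_fun:
  assumes wf: "wf_term ar t" and m: "matches t u l" and root: "l [] = Some (F f0)"
    and q: "pattern_pos u l q"
  shows "\<exists>f. t q = Some (F f)"
proof (cases "\<exists>z. u = q @ z")
  case True
  then obtain z where z: "u = q @ z" by blast
  have "t u = Some (F f0)" using matches_root[OF m root] .
  then show ?thesis using z wf_term_prefix[OF wf, of q z] by (cases "z = []") auto
next
  case False
  then show ?thesis using q m unfolding pattern_pos_def matches_def by blast
qed

lemma matches_if_eq_on_pattern:
  assumes "matches t u l" "\<And>q. pattern_pos u l q \<Longrightarrow> t' q = t q"
  shows "matches t' u l"
  using assms unfolding matches_def pattern_pos_def by fastforce

lemma pattern_pos_not_below_redex:
  assumes orth: "orthogonal ar R" and wf: "wf_term ar t"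
    and lr: "(l, r) \<in> R" and m: "matches t u l"
    and lr2: "(l2, r2) \<in> R" and m2: "matches t p l2"
    and np: "\<not> (\<exists>z. u = p @ z)" and q: "pattern_pos u l q"
  shows "\<not> (\<exists>x. q = p @ x)"
proof
  assume "\<exists>x. q = p @ x"
  then obtain x where x: "q = p @ x" by blast
  have "\<not> (\<exists>z. u = q @ z)" using x np by auto
  then obtain \<pi> f where \<pi>: "q = u @ \<pi>" "l \<pi> = Some (F f)"
    using q unfolding pattern_pos_def by blast
  then obtain y where y: "p = u @ y" "\<pi> = y @ x"
    using x np by (auto simp: append_eq_append_conv2)
  have "y \<noteq> []" using y np by auto
  moreover have "\<exists>g. l y = Some (F g)"
    using wf_term_prefix[of ar l y x] \<pi>(2) y(2) orthogonal_ruleD(1)[OF orth lr]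
    by (cases "x = []") (auto simp: finite_total_def)
  ultimately show False using orthogonal_no_overlap[OF orth wf lr lr2 m] m2 y(1) by blast
qed

section \<open>Meets and limits inferior of partial terms\<close>

lemma snoc_eq_append_iff:
  "(\<exists>z. q @ [i] = p @ z) \<longleftrightarrow> (\<exists>z. q = p @ z) \<or> q @ [i] = p"
proof
  assume "\<exists>z. q @ [i] = p @ z"
  then obtain z where z: "q @ [i] = p @ z" by blast
  show "(\<exists>z. q = p @ z) \<or> q @ [i] = p"
  proof (cases z rule: rev_cases)
    case (snoc z' j)
    then show ?thesis using z by auto
  qed (use z in simp)
qed auto

lemma strict_prefixes_snoc:
  "(\<forall>q' z. q @ [i] = q' @ z \<and> z \<noteq> [] \<longrightarrow> P q') \<longleftrightarrow> (\<forall>q' z. q = q' @ z \<and> z \<noteq> [] \<longrightarrow> P q') \<and> P q"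
proof
  assume h: "\<forall>q' z. q @ [i] = q' @ z \<and> z \<noteq> [] \<longrightarrow> P q'"
  have "P q'" if "q = q' @ z" "z \<noteq> []" for q' z using h that(1) by (metis append.assoc snoc_eq_iff_butlast)
  then show "(\<forall>q' z. q = q' @ z \<and> z \<noteq> [] \<longrightarrow> P q') \<and> P q" using h by blast
next
  assume h: "(\<forall>q' z. q = q' @ z \<and> z \<noteq> [] \<longrightarrow> P q') \<and> P q"
  show "\<forall>q' z. q @ [i] = q' @ z \<and> z \<noteq> [] \<longrightarrow> P q'"
  proof (intro allI impI)
    fix q' z assume "q @ [i] = q' @ z \<and> z \<noteq> []"
    then have "q = q' @ butlast z" by (metis butlast_append butlast_snoc append_is_Nil_conv)
    then show "P q'" using h by (cases "butlast z = []") auto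
  qed
qed

lemma repl_bot_term:
  "repl t p bot_term q = (if \<exists>z. q = p @ z then if q = p then Some Bot else None else t q)"
  unfolding repl_def bot_term_def by auto

lemma wf_term_repl_bot_term:
  assumes wf: "wf_term ar t" and tp: "t p \<noteq> None"
  shows "wf_term ar (repl t p bot_term)"
  unfolding wf_term_def repl_bot_term
proof (intro conjI allI)
  show "(if \<exists>z. [] = p @ z then if [] = p then Some Bot else None else t []) \<noteq> None"
    using wf_term_root[OF wf] by auto
  fix q i
  show "((if \<exists>z. q @ [i] = p @ z then if q @ [i] = p then Some Bot else None else t (q @ [i])) \<noteq> None)
    \<longleftrightarrow> (\<exists>f. (if \<exists>z. q = p @ z then if q = p then Some Bot else None else t q) = Some (F f) \<and> i < ar f)"
    using snoc_eq_append_iff[of q i p] tp wf_term_child[OF wf, of q i] by auto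
qed

definition meet_term :: "('f, 'v) pterm set \<Rightarrow> ('f, 'v) pterm \<Rightarrow> ('f, 'v) pterm" where
  "meet_term A a0 q =
     (if a0 q \<noteq> None \<and> (\<forall>q' z. q = q' @ z \<and> z \<noteq> [] \<longrightarrow> (\<forall>a \<in> A. a q' = a0 q'))
      then if \<forall>a \<in> A. a q = a0 q then a0 q else Some Bot
      else None)"

lemma meet_term_if_prefixes_agree:
  assumes "a0 q \<noteq> None" "\<forall>q' z. q = q' @ z \<and> z \<noteq> [] \<longrightarrow> (\<forall>a \<in> A. a q' = a0 q')"
  shows "meet_term A a0 q = (if \<forall>a \<in> A. a q = a0 q then a0 q else Some Bot)"
  unfolding meet_term_def by (rule if_P) (use assms in blast)

lemma meet_term_eq:
  assumes a0q: "a0 q \<noteq> None" and agree: "\<forall>q' z. q = q' @ z \<longrightarrow> (\<forall>a \<in> A. a q' = a0 q')"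
  shows "meet_term A a0 q = a0 q"
proof -
  have "\<forall>a \<in> A. a q = a0 q" using agree[rule_format, of q "[]"] by simp
  moreover have "\<forall>q' z. q = q' @ z \<and> z \<noteq> [] \<longrightarrow> (\<forall>a \<in> A. a q' = a0 q')"
    using agree by blast
  ultimately show ?thesis using meet_term_if_prefixes_agree[of a0 q A, OF a0q] by simp
qed

lemma meet_term_le_bot:
  assumes a0: "a0 \<in> A" and wfA: "\<forall>a \<in> A. wf_term ar a" and a: "a \<in> A"
  shows "le_bot (meet_term A a0) a"
  unfolding le_bot_def
proof (intro allI impI)
  fix q assume "meet_term A a0 q \<noteq> None"
  then have h: "a0 q \<noteq> None" "\<forall>q' z. q = q' @ z \<and> z \<noteq> [] \<longrightarrow> (\<forall>a \<in> A. a q' = a0 q')"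
    unfolding meet_term_def by (auto split: if_splits)
  have "a q \<noteq> None"
  proof (cases q rule: rev_cases)
    case Nil
    then show ?thesis using wf_term_root wfA a by blast
  next
    case (snoc q0 i)
    then have "a q0 = a0 q0" using h(2) a by auto
    moreover obtain f where "a0 q0 = Some (F f)" "i < ar f"
      using h(1) snoc wf_term_child[of ar a0] wfA a0 by blast
    ultimately show ?thesis using snoc wf_term_child wfA a by metis
  qed
  then show "a q \<noteq> None \<and> (meet_term A a0 q = Some Bot \<or> meet_term A a0 q = a q)"
    using h a unfolding meet_term_def by auto
qed

lemma wf_term_meet_term:
  assumes a0: "a0 \<in> A" and wfA: "\<forall>a \<in> A. wf_term ar a"
  shows "wf_term ar (meet_term A a0)"
  unfolding wf_term_def
proof (intro conjI allI)
  have wf0: "wf_term ar a0" using a0 wfA by blast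
  show "meet_term A a0 [] \<noteq> None" using wf_term_root[OF wf0] unfolding meet_term_def by auto
  fix q i
  show "meet_term A a0 (q @ [i]) \<noteq> None \<longleftrightarrow> (\<exists>f. meet_term A a0 q = Some (F f) \<and> i < ar f)"
    unfolding meet_term_def strict_prefixes_snoc
    using wf_term_child[OF wf0, of q i] by auto
qed

lemma le_bot_meet_term:
  assumes a0: "a0 \<in> A" and wfh: "wf_term ar h" and lower: "\<forall>a \<in> A. le_bot h a"
  shows "le_bot h (meet_term A a0)"
  unfolding le_bot_def
proof (intro allI impI)
  fix q assume hq: "h q \<noteq> None"
  have agree: "a q' = h q'" if "a \<in> A" "h q' \<noteq> None" "h q' \<noteq> Some Bot" for a q'
  proof -
    have "le_bot h a" using lower that(1) by blast
    then show ?thesis using that(2,3) unfolding le_bot_def by auto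
  qed
  have "le_bot h a0" using lower a0 by blast
  then have a0q: "a0 q \<noteq> None" using hq unfolding le_bot_def by simp
  moreover have "\<forall>q' z. q = q' @ z \<and> z \<noteq> [] \<longrightarrow> (\<forall>a \<in> A. a q' = a0 q')"
  proof (intro allI impI)
    fix q' z assume qz: "q = q' @ z \<and> z \<noteq> []"
    have "h (q' @ z) \<noteq> None" using hq qz by simp
    then obtain f where f: "h q' = Some (F f)" using wf_term_prefix[OF wfh, of q' z] qz by auto
    show "\<forall>a \<in> A. a q' = a0 q'"
    proof
      fix a assume "a \<in> A"
      then show "a q' = a0 q'" using agree[of a q'] agree[of a0 q'] a0 f by simp
    qed
  qed
  ultimately have meet: "meet_term A a0 q = (if \<forall>a \<in> A. a q = a0 q then a0 q else Some Bot)"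
    by (rule meet_term_if_prefixes_agree)
  show "meet_term A a0 q \<noteq> None \<and> (h q = Some Bot \<or> h q = meet_term A a0 q)"
  proof (cases "h q = Some Bot")
    case True
    then show ?thesis using a0q unfolding meet by simp
  next
    case False
    then have "a q = h q" if "a \<in> A" for a using agree[OF that hq] by blast
    then have "\<forall>a \<in> A. a q = a0 q" "a0 q = h q" using a0 by metis+
    then show ?thesis using a0q unfolding meet by simp
  qed
qed

lemma is_glb_meet_term:
  assumes "a0 \<in> A" and "\<forall>a \<in> A. wf_term ar a"
  shows "is_glb ar A (meet_term A a0)"
  unfolding is_glb_def
  using wf_term_meet_term[OF assms] meet_term_le_bot[OF assms] le_bot_meet_term[OF assms(1)] by blast

lemma le_bot_repl_bot_term:
  assumes gx: "le_bot g x" and wfg: "wf_term ar g" and gq: "g q \<noteq> x q"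
  shows "le_bot g (repl x q bot_term)"
  unfolding le_bot_def repl_bot_term
proof (intro allI impI)
  fix p assume gp: "g p \<noteq> None"
  show "(if \<exists>z. p = q @ z then if p = q then Some Bot else None else x p) \<noteq> None \<and>
      (g p = Some Bot \<or> g p = (if \<exists>z. p = q @ z then if p = q then Some Bot else None else x p))"
  proof (cases "\<exists>z. p = q @ z")
    case True
    then obtain z where z: "p = q @ z" by blast
    have "g q \<noteq> None \<and> (z \<noteq> [] \<longrightarrow> (\<exists>f. g q = Some (F f)))"
      using wf_term_prefix[OF wfg, of q z] gp z by simp
    moreover have "g q = Some Bot \<or> g q = x q" if "g q \<noteq> None"
      using gx that unfolding le_bot_def by blast
    ultimately have "g q = Some Bot" "z = []" using gq by auto
    then show ?thesis using z by simp
  qed (use gx gp in \<open>auto simp: le_bot_def\<close>)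
qed

lemma liminf_eventually_eq:
  assumes li: "is_liminf ar a lam x" and xq: "x q \<noteq> None" "x q \<noteq> Some Bot"
  shows "\<exists>c < lam. \<forall>k. c \<le> k \<and> k < lam \<longrightarrow> a k q = x q"
proof -
  define G where "G = {g. \<exists>b < lam. is_glb ar {a i | i. b \<le> i \<and> i < lam} g}"
  have lub: "is_lub ar G x" using li unfolding is_liminf_def G_def .
  have "\<exists>g \<in> G. g q = x q"
  proof (rule ccontr)
    assume none: "\<not> (\<exists>g \<in> G. g q = x q)"
    have "le_bot g (repl x q bot_term)" if g: "g \<in> G" for g
    proof (rule le_bot_repl_bot_term)
      show "le_bot g x" using lub g unfolding is_lub_def by blast
      show "wf_term ar g" using g unfolding G_def is_glb_def by blast
      show "g q \<noteq> x q" using none g by blast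
    qed
    moreover have "wf_term ar (repl x q bot_term)"
      using lub xq(1) wf_term_repl_bot_term unfolding is_lub_def by blast
    ultimately have "le_bot x (repl x q bot_term)" using lub unfolding is_lub_def by blast
    then show False using xq unfolding le_bot_def repl_bot_term by auto
  qed
  then obtain g b where g: "b < lam" "is_glb ar {a i | i. b \<le> i \<and> i < lam} g" "g q = x q"
    unfolding G_def by blast
  have "a k q = x q" if "b \<le> k" "k < lam" for k
  proof -
    have "le_bot g (a k)" using g(2) that unfolding is_glb_def by blast
    then show ?thesis using g(3) xq unfolding le_bot_def by (metis option.distinct(1))
  qed
  then show ?thesis using g(1) by blast
qed

lemma liminf_eq_if_eventually_stable:
  assumes li: "is_liminf ar a lam x" and c: "c < lam"
    and wf: "\<And>k. c \<le> k \<Longrightarrow> k < lam \<Longrightarrow> wf_term ar (a k)"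
    and stable: "\<And>k q' z. c \<le> k \<Longrightarrow> k < lam \<Longrightarrow> q = q' @ z \<Longrightarrow> a k q' = a c q'"
    and cq: "a c q \<noteq> None" "a c q \<noteq> Some Bot"
  shows "x q = a c q"
proof -
  define A where "A = {a k | k. c \<le> k \<and> k < lam}"
  have ac: "a c \<in> A" using c unfolding A_def by blast
  have wfA: "\<forall>a \<in> A. wf_term ar a" using wf unfolding A_def by blast
  have "meet_term A (a c) \<in> {g. \<exists>b < lam. is_glb ar {a i | i. b \<le> i \<and> i < lam} g}"
    using is_glb_meet_term[OF ac wfA] c unfolding A_def by blast
  then have le: "le_bot (meet_term A (a c)) x" using li unfolding is_liminf_def is_lub_def by blast
  have "\<forall>q' z. q = q' @ z \<longrightarrow> (\<forall>b \<in> A. b q' = a c q')"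
  proof (intro allI impI ballI)
    fix q' z b assume qz: "q = q' @ z" and "b \<in> A"
    then obtain k where k: "b = a k" "c \<le> k" "k < lam" unfolding A_def by blast
    then show "b q' = a c q'" using stable[OF k(2,3) qz] by simp
  qed
  then have meet: "meet_term A (a c) q = a c q" by (rule meet_term_eq[of "a c" q, OF cq(1)])
  then have "a c q = Some Bot \<or> a c q = x q" using le cq(1) unfolding le_bot_def by metis
  then show ?thesis using cq(2) by simp
qed

section \<open>Transfinite reductions\<close>

lemma osucc_least: "(i::'o::wellorder) < k \<Longrightarrow> osucc i \<le> k"
  unfolding osucc_def by (rule Least_le)

lemma ord0_if_minimal: "\<not> (\<exists>i. i < (b::'o::wellorder)) \<Longrightarrow> b = ord0"
  unfolding ord0_def using Least_le[of "\<lambda>x. True" b] by (metis le_less)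

lemma osucc_if_not_limit:
  assumes "\<exists>i. i < (b::'o::wellorder)" "\<not> is_limit b"
  shows "\<exists>i < b. b = osucc i"
proof -
  obtain i where i: "i < b" "\<forall>k. i < k \<longrightarrow> \<not> k < b" using assms unfolding is_limit_def by blast
  have "osucc i \<le> b" using osucc_least[OF i(1)] .
  moreover have "i < osucc i" unfolding osucc_def using i(1) by (rule LeastI)
  ultimately show ?thesis using i by (metis le_less)
qed

lemma strongly_p_convergesD:
  assumes "strongly_p_converges ar R alpha ts ps rs t"
  shows "i \<le> alpha \<Longrightarrow> wf_term ar (ts i)"
    and "i < alpha \<Longrightarrow> rstep ar R (ts i) (ps i) (rs i) (ts (osucc i))"
    and "lam \<le> alpha \<Longrightarrow> is_limit lam \<Longrightarrow> is_liminf ar (ctx ts ps) lam (ts lam)"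
    and "t = ts alpha"
  using assms unfolding strongly_p_converges_def by (auto simp: le_less)

lemma pattern_stable_at_limit:
  fixes ts :: "'o::wellorder \<Rightarrow> ('f, 'v) pterm"
  assumes conv: "strongly_p_converges ar R alpha ts ps rs t"
    and j: "j \<le> alpha" "is_limit j" and cj: "c < j"
    and wfl: "wf_term ar l" and root: "l [] = Some (F f0)" and mc: "matches (ts c) u l"
    and untouched: "\<And>k. c \<le> k \<Longrightarrow> k < j \<Longrightarrow> ts k (ps k) \<noteq> None \<and>
      (\<forall>q. pattern_pos u l q \<longrightarrow> ts k q = ts c q \<and> \<not> (\<exists>x. q = ps k @ x))"
    and q: "pattern_pos u l q"
  shows "ts j q = ts c q"
proof -
  note conv = strongly_p_convergesD[OF conv]
  have ctx_eq: "ctx ts ps k q' = ts c q'" if "c \<le> k" "k < j" "pattern_pos u l q'" for k q'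
    using untouched[OF that(1,2)] that(3) unfolding ctx_def repl_bot_term by auto
  have "ts j q = ctx ts ps c q"
  proof (rule liminf_eq_if_eventually_stable[OF conv(3)[OF j] cj])
    show "wf_term ar (ctx ts ps k)" if "c \<le> k" "k < j" for k
    proof -
      have "k \<le> alpha" using that(2) j(1) by simp
      then show ?thesis
        unfolding ctx_def using wf_term_repl_bot_term[OF conv(1)] untouched[OF that] by blast
    qed
    show "ctx ts ps k q' = ctx ts ps c q'" if "c \<le> k" "k < j" "q = q' @ z" for k q' z
    proof -
      have "pattern_pos u l q'" using pattern_pos_prefix[OF wfl] q that(3) by blast
      then show ?thesis using ctx_eq[OF that(1,2)] ctx_eq[OF order_refl cj] by simp
    qed
    have "c \<le> alpha" using cj j(1) by simp
    then obtain f where "ts c q = Some (F f)" using pattern_pos_fun[OF conv(1) mc root q] by blast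
    then show "ctx ts ps c q \<noteq> None" "ctx ts ps c q \<noteq> Some Bot"
      using ctx_eq[OF order_refl cj q] by simp_all
  qed
  then show ?thesis using ctx_eq[OF order_refl cj q] by simp
qed

lemma pattern_preserved:
  fixes ts :: "'o::wellorder \<Rightarrow> ('f, 'v) pterm"
  assumes orth: "orthogonal ar R" and conv: "strongly_p_converges ar R alpha ts ps rs t"
    and b: "b \<le> alpha" and lr: "(l, r) \<in> R" and mc: "matches (ts c) u l"
    and np: "\<And>k. c \<le> k \<Longrightarrow> k < b \<Longrightarrow> \<not> (\<exists>z. u = ps k @ z)"
  shows "c \<le> j \<Longrightarrow> j \<le> b \<Longrightarrow> pattern_pos u l q \<Longrightarrow> ts j q = ts c q"
proof (induction j arbitrary: q rule: less_induct)
  case (less j)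
  note conv' = strongly_p_convergesD[OF conv]
  have untouched: "ts k (ps k) \<noteq> None \<and>
      (\<forall>q. pattern_pos u l q \<longrightarrow> ts k q = ts c q \<and> \<not> (\<exists>x. q = ps k @ x))"
    if ck: "c \<le> k" and kj: "k < j" for k
  proof -
    have ka: "k < alpha" using kj less.prems b by simp
    have eq: "ts k q = ts c q" if "pattern_pos u l q" for q
      using less.IH[OF kj ck _ that] kj less.prems by simp
    then have mk: "matches (ts k) u l" by (rule matches_if_eq_on_pattern[OF mc])
    obtain l2 r2 where rk: "rs k = (l2, r2)" by (cases "rs k")
    then have "(l2, r2) \<in> R" "matches (ts k) (ps k) l2" "ts k (ps k) \<noteq> None"
      using rstep_matches[OF orth conv'(2)[OF ka]] by auto
    then show ?thesis
      using eq pattern_pos_not_below_redex[OF orth conv'(1) lr mk] np ck kj less.prems ka by auto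
  qed
  show ?case
  proof (cases "c < j")
    case False
    then show ?thesis using less.prems by simp
  next
    case cj: True
    show ?thesis
    proof (cases "is_limit j")
      case False
      then obtain k where k: "k < j" "j = osucc k" using osucc_if_not_limit cj by blast
      have ck: "c \<le> k" using cj k osucc_least leD leI by metis
      have "k < alpha" using k(1) less.prems(2) b by simp
      then obtain \<sigma> where "ts j = repl (ts k) (ps k) (subst \<sigma> (snd (rs k)))"
        using conv'(2) k(2) unfolding rstep_def by blast
      then show ?thesis using untouched[OF ck k(1)] less.prems unfolding repl_def by auto
    next
      case True
      have "j \<le> alpha" using less.prems(2) b by simp
      moreover obtain f0 where "l [] = Some (F f0)" using orthogonal_ruleD(3)[OF orth lr] by blast
      moreover have "wf_term ar l" using orthogonal_ruleD(1)[OF orth lr] by (simp add: finite_total_def)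
      ultimately show ?thesis
        using pattern_stable_at_limit[OF conv _ True cj _ _ mc untouched less.prems(3)] by blast
    qed
  qed
qed

section \<open>Descendants of redex occurrences\<close>

lemma redex_occ_desc1:
  assumes orth: "orthogonal ar R" and wf: "wf_term ar t" and wf': "wf_term ar t'"
    and step: "rstep ar R t p lr t'" and u0: "redex_occ ar R t u0" and u: "u \<in> desc1 lr p u0"
  shows "redex_occ ar R t' u"
proof -
  obtain l2 r2 where lr: "lr = (l2, r2)" by (cases lr)
  obtain \<sigma> where tp: "subterm t p = subst \<sigma> l2" and t': "t' = repl t p (subst \<sigma> r2)"
    using step lr unfolding rstep_def by auto
  have lr2: "(l2, r2) \<in> R" and m2: "matches t p l2" using rstep_matches[OF orth step] lr by auto
  have wfl2: "wf_term ar l2" and wfr2: "wf_term ar r2"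
    using orthogonal_ruleD(1,2)[OF orth lr2] by (auto simp: finite_total_def)
  obtain l1 r1 where lr1: "(l1, r1) \<in> R" and m1: "matches t u0 l1"
    using u0 redex_occ_iff_matches[OF orth wf] by blast
  show ?thesis
  proof (cases "\<exists>x. u0 = p @ x")
    case False
    then have "u = u0" using u unfolding desc1_def by simp
    moreover have "matches t' u0 l1"
      using matches_if_eq_on_pattern[OF m1] pattern_pos_not_below_redex[OF orth wf lr1 m1 lr2 m2 False]
      unfolding t' repl_def by auto
    ultimately show ?thesis using redex_occ_iff_matches[OF orth wf'] lr1 by blast
  next
    case True
    then obtain w w' x v where wx: "u = p @ w' @ x" "u0 = p @ w @ x"
        "l2 w = Some (V v)" "r2 w' = Some (V v)"
      using u lr unfolding desc1_def by (auto split: if_splits)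
    have "subterm t' u = subterm t u0"
    proof
      fix z
      have "t' (p @ w' @ x @ z) = subst \<sigma> r2 (w' @ x @ z)" unfolding t' repl_def by simp
      also have "\<dots> = \<sigma> v (x @ z)" using subst_at_var[OF wfr2 wx(4)] by simp
      also have "\<dots> = subst \<sigma> l2 (w @ x @ z)" using subst_at_var[OF wfl2 wx(3)] by simp
      also have "\<dots> = t (p @ w @ x @ z)" using fun_cong[OF tp, of "w @ x @ z"] by (simp add: subterm_def)
      finally show "subterm t' u z = subterm t u0 z" using wx(1,2) by (simp add: subterm_def)
    qed
    then show ?thesis using u0 unfolding redex_occ_def by simp
  qed
qed

lemma redex_occ_limit:
  assumes orth: "orthogonal ar R" and conv: "strongly_p_converges ar R alpha ts ps rs t"
    and b: "b \<le> alpha" and lim: "is_limit b" and bu: "ts b u \<noteq> None" "ts b u \<noteq> Some Bot"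
    and c0: "c0 < b" and eventually: "\<And>i. c0 \<le> i \<Longrightarrow> i < b \<Longrightarrow> redex_occ ar R (ts i) u"
  shows "redex_occ ar R (ts b) u"
proof -
  note conv' = strongly_p_convergesD[OF conv]
  obtain c1 where c1: "c1 < b" "\<And>k. c1 \<le> k \<Longrightarrow> k < b \<Longrightarrow> ctx ts ps k u = ts b u"
    using liminf_eventually_eq[OF conv'(3)[OF b lim] bu] by blast
  define c where "c = max c0 c1"
  have cb: "c < b" using c0 c1 by (simp add: c_def)
  have "redex_occ ar R (ts c) u" using eventually cb by (simp add: c_def)
  moreover have "wf_term ar (ts c)" using conv'(1) cb b by simp
  ultimately obtain l r where lr: "(l, r) \<in> R" and mc: "matches (ts c) u l"
    using redex_occ_iff_matches[OF orth] by blast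
  have np: "\<not> (\<exists>z. u = ps k @ z)" if "c \<le> k" "k < b" for k
    using c1(2)[of k] that bu unfolding ctx_def repl_bot_term by (auto simp: c_def split: if_splits)
  have "ts b q = ts c q" if "pattern_pos u l q" for q
    using pattern_preserved[OF orth conv b lr mc np less_imp_le[OF cb] order_refl that] .
  then have "matches (ts b) u l" by (rule matches_if_eq_on_pattern[OF mc])
  then show ?thesis using redex_occ_iff_matches[OF orth conv'(1)[OF b]] lr by blast
qed

lemma descendants_redex_occ:
  assumes orth: "orthogonal ar R" and conv: "strongly_p_converges ar R alpha ts ps rs t"
    and init: "\<forall>u \<in> U. redex_occ ar R (ts ord0) u" and desc: "descendant_family alpha ts ps rs U D"
  shows "b \<le> alpha \<Longrightarrow> \<forall>u \<in> D b. redex_occ ar R (ts b) u"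
proof (induction b rule: less_induct)
  case (less b)
  note conv' = strongly_p_convergesD[OF conv]
  consider "\<not> (\<exists>i. i < b)" | i where "i < b" "b = osucc i" | "is_limit b"
    using osucc_if_not_limit by blast
  then show ?case
  proof cases
    case 1
    then show ?thesis
      using ord0_if_minimal[OF 1] init desc less.prems unfolding descendant_family_def by auto
  next
    case (2 i)
    have ia: "i < alpha" using 2 less.prems by simp
    have "D b = desc_step (rs i) (ps i) (D i)" using desc ia 2(2) unfolding descendant_family_def by simp
    then show ?thesis
      using redex_occ_desc1[OF orth conv'(1) conv'(1) conv'(2)[OF ia]] less.IH[OF 2(1)]
        less_imp_le[OF ia] less.prems 2(2)
      unfolding desc_step_def by auto
  next
    case 3
    show ?thesis
    proof
      fix u assume "u \<in> D b"
      then obtain c0 where "ts b u \<noteq> None" "ts b u \<noteq> Some Bot" "c0 < b"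
          "\<And>i. c0 \<le> i \<Longrightarrow> i < b \<Longrightarrow> u \<in> D i"
        using desc 3 less.prems unfolding descendant_family_def by auto
      then show "redex_occ ar R (ts b) u"
        using redex_occ_limit[OF orth conv less.prems 3] less.IH less.prems by auto
    qed
  qed
qed

theorem proposition5p10:
  fixes ar :: "'f \<Rightarrow> nat"
    and R :: "(('f, 'v) pterm \<times> ('f, 'v) pterm) set"
    and alpha :: "'o::wellorder"
    and ts :: "'o \<Rightarrow> ('f, 'v) pterm"
    and ps :: "'o \<Rightarrow> pos"
    and rs :: "'o \<Rightarrow> ('f, 'v) pterm \<times> ('f, 'v) pterm"
    and s t :: "('f, 'v) pterm"
    and U :: "pos set"
    and D :: "'o \<Rightarrow> pos set"
  assumes "orthogonal ar R"
    and "strongly_p_converges ar R alpha ts ps rs t"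
    and "s = ts ord0"
    and "\<forall>u \<in> U. redex_occ ar R s u"
    and "descendant_family alpha ts ps rs U D"
  shows "\<forall>u \<in> D alpha. redex_occ ar R t u"
  using descendants_redex_occ[OF assms(1,2) _ assms(5), of alpha] assms(3,4)
    strongly_p_convergesD(4)[OF assms(2)] by simp

end
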